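(* Let $K$ be a compactum and $U_1,U_2\subset K$ disjoint open sets such that $K\setminus(U_1\cup U_2)$ has at most finitely many components intersecting both $\partial U_1$ and $\partial U_2$, say $n$ of them. Then for any open sets $W_1\subset U_1$ and $W_2\subset U_2$, the set $K\setminus(W_1\cup W_2)$ has at most $n$ components intersecting both $\partial W_1$ and $\partial W_2$.
   Context: A compactum is a compact metric space; boundaries are taken relative to $K$. *)

theory Defs
  imports "HOL-Analysis.Analysis"
begin

definition bridging_components :: "'a::metric_space set \<Rightarrow> 'a set \<Rightarrow> 'a set \<Rightarrow> 'a set set" where
  "bridging_components K A B =
     {C \<in> components (K - (A \<union> B)).
        C \<inter> (top_of_set K) frontier_of A \<noteq> {} \<and> C \<inter> (top_of_set K) frontier_of B \<noteq> {}}"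

end

theory Submission
  imports Defs
begin

text \<open>Let \<open>D\<close> be a component of \<open>K - (W1 \<union> W2)\<close> meeting both boundaries. The compact set
  \<open>S = D - (U1 \<union> U2)\<close> contains the boundary points of \<open>U1\<close> and of \<open>U2\<close> lying in \<open>D\<close>. If no
  component of \<open>K - (U1 \<union> U2)\<close> inside \<open>D\<close> met both boundaries, no connected subset of \<open>S\<close> would
  join them, so by the cut-wire-fence theorem \<open>S\<close> would split into two disjoint closed pieces,
  one containing each boundary; together with \<open>closure U1\<close> and \<open>closure U2\<close> these pieces would
  disconnect \<open>D\<close>. Hence every bridging component for \<open>W1, W2\<close> contains one for \<open>U1, U2\<close>, and
  since the former are pairwise disjoint, there are at most \<open>n\<close> of them.\<close>

lemma frontier_of_openin_top_of_set:
  assumes "openin (top_of_set K) U"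
  shows "(top_of_set K) frontier_of U = K \<inter> closure U - U"
  using assms openin_imp_subset
  by (fastforce simp: frontier_of_openin closure_of_subtopology_open)

lemma closure_Int_openin_eq_empty:
  assumes "openin (top_of_set K) V" "U \<inter> V = {}" "U \<subseteq> K"
  shows "closure U \<inter> V = {}"
proof -
  obtain T where T: "open T" "V = K \<inter> T" using assms(1) openin_open by blast
  have "T \<inter> closure U \<subseteq> closure (T \<inter> U)" using T(1) open_Int_closure_subset by blast
  moreover have "T \<inter> U = {}" using assms T by blast
  ultimately show ?thesis using T by auto
qed

lemma closed_diff_Un_openin:
  assumes "closed K" "openin (top_of_set K) U" "openin (top_of_set K) V"
  shows "closed (K - (U \<union> V))"
proof -
  have "closedin (top_of_set K) (K - (U \<union> V))"
    using assms(2,3) by (metis closedin_diff closedin_topspace openin_Un topspace_euclidean_subtopology)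
  then show ?thesis using assms(1) closedin_closed_trans by blast
qed

lemma compact_closed_split_if_no_connected_bridge:
  fixes S :: "'a::metric_space set"
  assumes "compact S" "closed A" "closed B" "A \<subseteq> S" "B \<subseteq> S"
    and no_bridge: "\<And>C. connected C \<Longrightarrow> C \<subseteq> S \<Longrightarrow> C \<inter> A = {} \<or> C \<inter> B = {}"
  obtains P Q where "closed P" "closed Q" "S = P \<union> Q" "P \<inter> Q = {}" "A \<subseteq> P" "B \<subseteq> Q"
proof -
  have "separated_between (top_of_set S) A B"
  proof (rule cut_wire_fence_theorem)
    show "compact_space (top_of_set S)" using assms(1) by (simp add: compact_space_subtopology)
    show "closedin (top_of_set S) A" "closedin (top_of_set S) B"
      using assms(2-5) by (simp_all add: closed_subset)
    show "disjnt C A \<or> disjnt C B" if "connectedin (top_of_set S) C" for C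
      using that no_bridge by (auto simp: connectedin_subtopology disjnt_def)
  qed (simp add: Hausdorff_space_subtopology)
  then obtain P where P: "closedin (top_of_set S) P" "openin (top_of_set S) P"
    and "A \<subseteq> P" "B \<subseteq> S - P"
    unfolding separated_between by auto
  moreover have "closedin (top_of_set S) (S - P)"
    using P(2) by (metis closedin_diff closedin_topspace topspace_euclidean_subtopology)
  moreover have "closed S" using assms(1) compact_imp_closed by blast
  ultimately show thesis
    using that[of P "S - P"] closedin_closed_trans closedin_imp_subset by blast
qed

text \<open>The sets \<open>closure U1 \<union> P\<close> and \<open>closure U2 \<union> Q\<close> are closed, cover \<open>D\<close> and are disjoint on \<open>D\<close>.\<close>

lemma connected_disjoint_closure_if_split:
  assumes "connected D"
    and oU1: "openin (top_of_set K) U1" and oU2: "openin (top_of_set K) U2" and "U1 \<inter> U2 = {}"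
    and "closed P" "closed Q" "D - (U1 \<union> U2) = P \<union> Q" "P \<inter> Q = {}"
    and "D \<inter> closure U1 - U1 \<subseteq> P" "D \<inter> closure U2 - U2 \<subseteq> Q"
  shows "D \<inter> closure U1 = {} \<or> D \<inter> closure U2 = {}"
proof -
  have "U1 \<subseteq> K" "U2 \<subseteq> K" using oU1 oU2 openin_imp_subset by blast+
  then have cl: "closure U1 \<inter> U2 = {}" "closure U2 \<inter> U1 = {}"
    using closure_Int_openin_eq_empty oU1 oU2 assms(4) by (metis inf_commute)+
  have "D \<inter> closure U1 \<inter> closure U2 \<subseteq> P \<inter> Q"
    using cl assms(9,10) by blast
  moreover have "D \<inter> closure U1 \<inter> Q \<subseteq> P" "D \<inter> closure U2 \<inter> P \<subseteq> Q"
    using assms(7,9,10) by blast+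
  ultimately have "(closure U1 \<union> P) \<inter> (closure U2 \<union> Q) \<inter> D = {}"
    using assms(8) by blast
  moreover have "D \<subseteq> (closure U1 \<union> P) \<union> (closure U2 \<union> Q)"
    using assms(7) closure_subset by blast
  moreover have "closed (closure U1 \<union> P)" "closed (closure U2 \<union> Q)"
    using assms(5,6) by auto
  ultimately have "(closure U1 \<union> P) \<inter> D = {} \<or> (closure U2 \<union> Q) \<inter> D = {}"
    using \<open>connected D\<close> unfolding connected_closed by blast
  then show ?thesis by blast
qed

lemma bridging_component_through_connected:
  assumes oU1: "openin (top_of_set K) U1" and oU2: "openin (top_of_set K) U2"
    and D_comp: "D \<in> components G" and "K - (U1 \<union> U2) \<subseteq> G" "G \<subseteq> K"
    and "connected C" "C \<subseteq> D - (U1 \<union> U2)" "C \<inter> closure U1 \<noteq> {}" "C \<inter> closure U2 \<noteq> {}"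
  shows "\<exists>C' \<in> bridging_components K U1 U2. C' \<subseteq> D"
proof -
  define F where "F = K - (U1 \<union> U2)"
  obtain x y where x: "x \<in> C \<inter> closure U1" and y: "y \<in> C \<inter> closure U2"
    using assms(8,9) by blast
  have "D \<subseteq> K" using in_components_subset[OF D_comp] \<open>G \<subseteq> K\<close> by blast
  then have "C \<subseteq> F" using \<open>C \<subseteq> D - (U1 \<union> U2)\<close> unfolding F_def by blast
  define C' where "C' = connected_component_set F x"
  have C'_comp: "C' \<in> components F"
    unfolding C'_def components_def using x \<open>C \<subseteq> F\<close> by blast
  have "C \<subseteq> C'"
    unfolding C'_def using connected_component_maximal x \<open>connected C\<close> \<open>C \<subseteq> F\<close> by blast
  have "C' \<subseteq> D"
  proof (rule components_maximal[OF D_comp])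
    show "connected C'" using C'_comp in_components_connected by blast
    show "C' \<subseteq> G" using in_components_subset[OF C'_comp] assms(4) unfolding F_def by blast
    show "D \<inter> C' \<noteq> {}" using x \<open>C \<subseteq> C'\<close> \<open>C \<subseteq> D - (U1 \<union> U2)\<close> by blast
  qed
  moreover have "C' \<inter> (top_of_set K) frontier_of U1 \<noteq> {}" "C' \<inter> (top_of_set K) frontier_of U2 \<noteq> {}"
    using x y \<open>C \<subseteq> C'\<close> \<open>C \<subseteq> F\<close>
    unfolding frontier_of_openin_top_of_set[OF oU1] frontier_of_openin_top_of_set[OF oU2] F_def
    by blast+
  ultimately show ?thesis
    using C'_comp unfolding bridging_components_def F_def by blast
qed

lemma bridging_component_contains_bridging_component:
  fixes K U1 U2 W1 W2 D :: "'a::metric_space set"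
  assumes K: "compact K"
    and oU1: "openin (top_of_set K) U1" and oU2: "openin (top_of_set K) U2"
    and disj: "U1 \<inter> U2 = {}"
    and oW1: "openin (top_of_set K) W1" and oW2: "openin (top_of_set K) W2"
    and "W1 \<subseteq> U1" "W2 \<subseteq> U2"
    and D: "D \<in> bridging_components K W1 W2"
  shows "\<exists>C \<in> bridging_components K U1 U2. C \<subseteq> D"
proof (rule ccontr)
  assume no_C: "\<not> ?thesis"
  define S where "S = D - (U1 \<union> U2)"
  have D_comp: "D \<in> components (K - (W1 \<union> W2))"
    using D by (simp add: bridging_components_def)
  have DW1: "D \<inter> closure W1 \<noteq> {}" and DW2: "D \<inter> closure W2 \<noteq> {}"
    using D unfolding bridging_components_def frontier_of_openin_top_of_set[OF oW1]
      frontier_of_openin_top_of_set[OF oW2] by blast+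
  have "closed K" using K compact_imp_closed by blast
  have "closed D"
    using closed_components[OF closed_diff_Un_openin[OF \<open>closed K\<close> oW1 oW2] D_comp] .
  have "D \<subseteq> K" using in_components_subset[OF D_comp] by blast
  have "compact S"
  proof -
    have "S = (K \<inter> D) \<inter> (K - (U1 \<union> U2))" unfolding S_def using \<open>D \<subseteq> K\<close> by blast
    then show ?thesis
      using compact_Int_closed[OF compact_Int_closed[OF K \<open>closed D\<close>]
          closed_diff_Un_openin[OF \<open>closed K\<close> oU1 oU2]] by simp
  qed
  have U1K: "U1 \<subseteq> K" and U2K: "U2 \<subseteq> K" using oU1 oU2 openin_imp_subset by blast+
  have "closure U1 \<inter> U2 = {}" "closure U2 \<inter> U1 = {}"
    using closure_Int_openin_eq_empty[OF oU2 disj U1K] closure_Int_openin_eq_empty[OF oU1 _ U2K] disj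
    by blast+
  then have A_eq: "D \<inter> closure U1 - U1 = S \<inter> closure U1"
    and B_eq: "D \<inter> closure U2 - U2 = S \<inter> closure U2"
    unfolding S_def by blast+
  have no_bridge: "C \<inter> (S \<inter> closure U1) = {} \<or> C \<inter> (S \<inter> closure U2) = {}"
    if "connected C" "C \<subseteq> S" for C
    using bridging_component_through_connected[OF oU1 oU2 D_comp _ _ that(1)] that(2) no_C
      \<open>W1 \<subseteq> U1\<close> \<open>W2 \<subseteq> U2\<close> unfolding S_def by blast
  obtain P Q where "closed P" "closed Q" "S = P \<union> Q" "P \<inter> Q = {}"
    "S \<inter> closure U1 \<subseteq> P" "S \<inter> closure U2 \<subseteq> Q"
    using compact_closed_split_if_no_connected_bridge[OF \<open>compact S\<close> _ _ _ _ no_bridge]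
      \<open>compact S\<close> compact_imp_closed closed_Int closed_closure Int_lower1
    by metis
  then have "D \<inter> closure U1 = {} \<or> D \<inter> closure U2 = {}"
    using connected_disjoint_closure_if_split[OF in_components_connected[OF D_comp] oU1 oU2 disj]
    unfolding A_eq B_eq S_def by blast
  then show False
    using DW1 DW2 closure_mono[OF \<open>W1 \<subseteq> U1\<close>] closure_mono[OF \<open>W2 \<subseteq> U2\<close>] by blast
qed

lemma card_le_if_each_contains_member:
  assumes "finite \<Y>" "{} \<notin> \<Y>" "pairwise disjnt \<X>" "\<And>D. D \<in> \<X> \<Longrightarrow> \<exists>C \<in> \<Y>. C \<subseteq> D"
  shows "finite \<X> \<and> card \<X> \<le> card \<Y>"
proof -
  obtain f where f: "\<And>D. D \<in> \<X> \<Longrightarrow> f D \<in> \<Y> \<and> f D \<subseteq> D" using assms(4) by metis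
  have "inj_on f \<X>"
  proof (rule inj_onI)
    fix D1 D2 assume "D1 \<in> \<X>" "D2 \<in> \<X>" "f D1 = f D2"
    then have "\<not> disjnt D1 D2" using f assms(2) by (metis disjnt_subset1 disjnt_subset2 disjnt_self_iff_empty)
    then show "D1 = D2" using assms(3) \<open>D1 \<in> \<X>\<close> \<open>D2 \<in> \<X>\<close> by (meson pairwiseD)
  qed
  moreover have "f ` \<X> \<subseteq> \<Y>" using f by blast
  ultimately show ?thesis
    using assms(1) card_inj_on_le finite_imageD finite_subset by metis
qed

theorem lemma4p2:
  fixes K U1 U2 W1 W2 :: "'a::metric_space set" and n :: nat
  assumes "compact K"
    and "openin (top_of_set K) U1" and "openin (top_of_set K) U2"
    and "U1 \<inter> U2 = {}"
    and "finite (bridging_components K U1 U2)"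
    and "card (bridging_components K U1 U2) = n"
    and "openin (top_of_set K) W1" and "openin (top_of_set K) W2"
    and "W1 \<subseteq> U1" and "W2 \<subseteq> U2"
  shows "finite (bridging_components K W1 W2) \<and> card (bridging_components K W1 W2) \<le> n"
proof -
  have "{} \<notin> bridging_components K U1 U2"
    using in_components_nonempty by (auto simp: bridging_components_def)
  moreover have "pairwise disjnt (bridging_components K W1 W2)"
    using pairwise_disjoint_components
    by (fastforce simp: bridging_components_def pairwise_def disjnt_def)
  ultimately show ?thesis
    using card_le_if_each_contains_member[OF assms(5)]
      bridging_component_contains_bridging_component[OF assms(1-4,7-10)] assms(6)
    by blast
qed

end
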